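(* Let $T=(V,E)$ be an infinite spherically symmetric rooted tree with root $v_0$ and branching degrees $(d_r)_{r\ge0}$, $d_r\ge2$, $\sup_rd_r<\infty$, and let $H$, $\mathcal U_{n,r}$, $\mathcal V_n$ be as in the context. Then there are orthogonal direct sum decompositions $\ell^2(V)=\bigoplus_{n=0}^\infty\mathcal V_n=\bigoplus_{n=0}^\infty\bigoplus_{r=n}^\infty\mathcal U_{n,r}$, and for every $n\ge0$ the subspace $\mathcal V_n$ is invariant under $H$, $H^*$ and the adjacency operator $A_T$.
   Context: A rooted tree with root $v_0$ is spherically symmetric with branching degrees $(d_r)$ if every vertex at distance $r$ from $v_0$ has exactly $d_r$ neighbours at distance $r+1$. $|v|$ is the distance to $v_0$, $S_r=\{v:|v|=r\}$, $\ell^2(S_r)\subset\ell^2(V)$ the functions vanishing off $S_r$; for $v\ne v_0$, $v_-$ is the neighbour of $v$ closer to $v_0$. $H$ is the operator on $\ell^2(V)$ with $(H\xi)(v)=\xi(v_-)$ for $v\ne v_0$ and $(H\xi)(v_0)=0$; $A_T$ is the adjacency operator. Define $\mathcal U_{0,0}=\ell^2(S_0)$ and $\mathcal U_{0,r}=H^r(\mathcal U_{0,0})$ for $r\ge0$; inductively for $n\ge1$, $\mathcal U_{n,n}$ is the orthogonal complement of $\mathcal U_{0,n}\oplus\cdots\oplus\mathcal U_{n-1,n}$ in $\ell^2(S_n)$, $\mathcal U_{n,r}=H^{r-n}(\mathcal U_{n,n})$ for $r\ge n$; and $\mathcal V_n=\bigoplus_{r\ge n}\mathcal U_{n,r}$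 (closed span). *)

theory Defs
  imports "HOL-Analysis.Analysis"
begin

text \<open>Rooted tree on the vertex type 'v, given by the root v0 and the parent map par
  (par v = v_- for v \<noteq> v0; the value par v0 is irrelevant).\<close>

definition children :: "('v \<Rightarrow> 'v) \<Rightarrow> 'v \<Rightarrow> 'v \<Rightarrow> 'v set" where
  "children par v0 v = {w. w \<noteq> v0 \<and> par w = v}"

definition depth :: "('v \<Rightarrow> 'v) \<Rightarrow> 'v \<Rightarrow> 'v \<Rightarrow> nat" where
  "depth par v0 v = (LEAST n. (par ^^ n) v = v0)"

definition ell2 :: "('v \<Rightarrow> complex) set" where
  "ell2 = {f. (\<lambda>v. (cmod (f v))^2) summable_on UNIV}"

definition l2inner :: "('v \<Rightarrow> complex) \<Rightarrow> ('v \<Rightarrow> complex) \<Rightarrow> complex" where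
  "l2inner f g = infsum (\<lambda>v. cnj (f v) * g v) UNIV"

definition l2norm :: "('v \<Rightarrow> complex) \<Rightarrow> real" where
  "l2norm f = sqrt (infsum (\<lambda>v. (cmod (f v))^2) UNIV)"

definition closed_subspace :: "('v \<Rightarrow> complex) set \<Rightarrow> bool" where
  "closed_subspace W \<longleftrightarrow> W \<subseteq> ell2 \<and> (\<lambda>v. 0) \<in> W
     \<and> (\<forall>f\<in>W. \<forall>g\<in>W. (\<lambda>v. f v + g v) \<in> W)
     \<and> (\<forall>c f. f \<in> W \<longrightarrow> (\<lambda>v. c * f v) \<in> W)
     \<and> (\<forall>s f. (\<forall>k. s k \<in> W) \<and> f \<in> ell2 \<and> (\<lambda>k. l2norm (\<lambda>v. s k v - f v)) \<longlonglongrightarrow> 0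
              \<longrightarrow> f \<in> W)"

definition closed_span :: "('v \<Rightarrow> complex) set \<Rightarrow> ('v \<Rightarrow> complex) set" where
  "closed_span S = \<Inter>{W. closed_subspace W \<and> S \<subseteq> W}"

definition orth :: "('v \<Rightarrow> complex) set \<Rightarrow> ('v \<Rightarrow> complex) set \<Rightarrow> bool" where
  "orth A B \<longleftrightarrow> (\<forall>f\<in>A. \<forall>g\<in>B. l2inner f g = 0)"

definition Hop :: "('v \<Rightarrow> 'v) \<Rightarrow> 'v \<Rightarrow> ('v \<Rightarrow> complex) \<Rightarrow> ('v \<Rightarrow> complex)" where
  "Hop par v0 \<xi> = (\<lambda>v. if v = v0 then 0 else \<xi> (par v))"

definition adjacency :: "('v \<Rightarrow> 'v) \<Rightarrow> 'v \<Rightarrow> ('v \<Rightarrow> complex) \<Rightarrow> ('v \<Rightarrow> complex)" where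
  "adjacency par v0 \<xi> =
     (\<lambda>v. (if v = v0 then 0 else \<xi> (par v)) + (\<Sum>w\<in>children par v0 v. \<xi> w))"

definition is_adjoint :: "(('v \<Rightarrow> complex) \<Rightarrow> ('v \<Rightarrow> complex)) \<Rightarrow> (('v \<Rightarrow> complex) \<Rightarrow> ('v \<Rightarrow> complex)) \<Rightarrow> bool" where
  "is_adjoint K L \<longleftrightarrow> L ` ell2 \<subseteq> ell2 \<and>
     (\<forall>f\<in>ell2. \<forall>g\<in>ell2. l2inner (K f) g = l2inner f (L g))"

definition ellS :: "('v \<Rightarrow> 'v) \<Rightarrow> 'v \<Rightarrow> nat \<Rightarrow> ('v \<Rightarrow> complex) set" where
  "ellS par v0 r = {f \<in> ell2. \<forall>v. depth par v0 v \<noteq> r \<longrightarrow> f v = 0}"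

text \<open>Ulist par v0 m = [U_{0,0}, U_{1,1}, ..., U_{m,m}].\<close>
primrec Ulist :: "('v \<Rightarrow> 'v) \<Rightarrow> 'v \<Rightarrow> nat \<Rightarrow> ('v \<Rightarrow> complex) set list" where
  "Ulist par v0 0 = [ellS par v0 0]"
| "Ulist par v0 (Suc m) = Ulist par v0 m @
     [{f \<in> ellS par v0 (Suc m). \<forall>k\<le>m. \<forall>g \<in> (Hop par v0 ^^ (Suc m - k)) ` (Ulist par v0 m ! k).
          l2inner g f = 0}]"

text \<open>U_{n,r} = H^(r-n)(U_{n,n}), meaningful for r \<ge> n.\<close>
definition Usp :: "('v \<Rightarrow> 'v) \<Rightarrow> 'v \<Rightarrow> nat \<Rightarrow> nat \<Rightarrow> ('v \<Rightarrow> complex) set" where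
  "Usp par v0 n r = (Hop par v0 ^^ (r - n)) ` (Ulist par v0 n ! n)"

definition Vsp :: "('v \<Rightarrow> 'v) \<Rightarrow> 'v \<Rightarrow> nat \<Rightarrow> ('v \<Rightarrow> complex) set" where
  "Vsp par v0 n = closed_span (\<Union>r\<in>{n..}. Usp par v0 n r)"

end

theory Submission
  imports Defs
begin

text \<open>
  Every sphere S_r is finite, and H multiplies the inner product of l2(S_r) by d_r:
  (H f, H g) on S_(r+1) equals d_r (f, g) on S_r.  Hence the U_(n,r) with n \<le> r are
  pairwise orthogonal.  They also span l2(S_r): for f on S_(r+1) the function
  f - H (H* f / d_r) is annihilated by H* (summation over the children), so it is
  orthogonal to H (l2(S_r)) and lies in U_(r+1,r+1); induct on r.  Truncating to balls
  shows that an l2 function is determined by its restrictions to the spheres, so the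
  U_(n,r) span l2(V) and V_n consists of the l2 functions whose restriction to every
  S_r lies in U_(n,r).  Finally H maps U_(n,r) into U_(n,r+1), and H* maps U_(n,r+1)
  into U_(n,r), because H* H = d_r and H* vanishes on U_(r+1,r+1), which is orthogonal
  to H (l2(S_r)).  So every V_n is invariant under H, under H* (which is the only
  possible adjoint of H, as testing against indicator functions shows) and under
  A_T = H + H*.
\<close>

section \<open>Closed subspaces of l2\<close>

definition linear_subspace :: "('a \<Rightarrow> complex) set \<Rightarrow> bool" where
  "linear_subspace C \<longleftrightarrow> (\<lambda>v. 0) \<in> C \<and> (\<forall>f\<in>C. \<forall>g\<in>C. (\<lambda>v. f v + g v) \<in> C)
     \<and> (\<forall>c. \<forall>f\<in>C. (\<lambda>v. c * f v) \<in> C)"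

lemma linear_subspace_zero: "linear_subspace C \<Longrightarrow> (\<lambda>v. 0) \<in> C"
  and linear_subspace_add: "linear_subspace C \<Longrightarrow> f \<in> C \<Longrightarrow> g \<in> C \<Longrightarrow> (\<lambda>v. f v + g v) \<in> C"
  and linear_subspace_scale: "linear_subspace C \<Longrightarrow> f \<in> C \<Longrightarrow> (\<lambda>v. c * f v) \<in> C"
  by (simp_all add: linear_subspace_def)

lemma linear_subspace_image:
  assumes "linear_subspace C"
    and "T (\<lambda>v. 0) = (\<lambda>v. 0)"
    and "\<And>f g. T (\<lambda>v. f v + g v) = (\<lambda>v. T f v + T g v)"
    and "\<And>c f. T (\<lambda>v. c * f v) = (\<lambda>v. c * T f v)"
  shows "linear_subspace (T ` C)"
  using assms unfolding linear_subspace_def by (auto simp flip: assms(2-4))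

lemma linear_subspace_vimage:
  assumes "linear_subspace C"
    and "T (\<lambda>v. 0) = (\<lambda>v. 0)"
    and "\<And>f g. T (\<lambda>v. f v + g v) = (\<lambda>v. T f v + T g v)"
    and "\<And>c f. T (\<lambda>v. c * f v) = (\<lambda>v. c * T f v)"
  shows "linear_subspace {f. T f \<in> C}"
  using assms unfolding linear_subspace_def by auto

definition pointwise_closed :: "('a \<Rightarrow> complex) set \<Rightarrow> bool" where
  "pointwise_closed C \<longleftrightarrow> (\<forall>s f. (\<forall>k. s k \<in> C) \<and> (\<forall>v. (\<lambda>k. s k v) \<longlonglongrightarrow> f v) \<longrightarrow> f \<in> C)"

lemma pointwise_closedD:
  "pointwise_closed C \<Longrightarrow> (\<And>k. s k \<in> C) \<Longrightarrow> (\<And>v. (\<lambda>k. s k v) \<longlonglongrightarrow> f v) \<Longrightarrow> f \<in> C"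
  unfolding pointwise_closed_def by blast

lemma pointwise_closed_zero: "pointwise_closed {\<lambda>v. 0}"
  unfolding pointwise_closed_def by (auto simp: fun_eq_iff LIMSEQ_const_iff)

definition inner_on :: "'a set \<Rightarrow> ('a \<Rightarrow> complex) \<Rightarrow> ('a \<Rightarrow> complex) \<Rightarrow> complex" where
  "inner_on S f g = (\<Sum>v\<in>S. cnj (f v) * g v)"

definition supported_on :: "'a set \<Rightarrow> ('a \<Rightarrow> complex) set" where
  "supported_on S = {f. \<forall>v. v \<notin> S \<longrightarrow> f v = 0}"

definition perp_on :: "'a set \<Rightarrow> ('a \<Rightarrow> complex) set \<Rightarrow> ('a \<Rightarrow> complex) set" where
  "perp_on S G = {f \<in> supported_on S. \<forall>g\<in>G. inner_on S g f = 0}"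

lemma inner_on_add_right: "inner_on S g (\<lambda>v. f v + h v) = inner_on S g f + inner_on S g h"
  by (simp add: inner_on_def sum.distrib distrib_left)

lemma inner_on_scale_right: "inner_on S g (\<lambda>v. c * f v) = c * inner_on S g f"
  by (simp add: inner_on_def sum_distrib_left mult.left_commute)

lemma inner_on_zero_right: "inner_on S g (\<lambda>v. 0) = 0"
  by (simp add: inner_on_def)

lemma linear_subspace_inner_on_eq_0: "linear_subspace {g. inner_on S g f = 0}"
  by (simp add: linear_subspace_def inner_on_def sum.distrib distrib_right mult.assoc
      flip: sum_distrib_left)

lemma linear_subspace_perp_on: "linear_subspace (perp_on S G)"
  by (auto simp: linear_subspace_def perp_on_def supported_on_def
      inner_on_add_right inner_on_scale_right inner_on_zero_right)

lemma pointwise_closed_perp_on: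
  assumes "finite S"
  shows "pointwise_closed (perp_on S G)"
  unfolding pointwise_closed_def
proof (intro allI impI)
  fix s f assume s: "(\<forall>k. s k \<in> perp_on S G) \<and> (\<forall>v. (\<lambda>k. s k v) \<longlonglongrightarrow> f v)"
  have "f v = 0" if "v \<notin> S" for v
  proof -
    have "(\<lambda>k. s k v) = (\<lambda>k. 0)"
      using s that by (auto simp: perp_on_def supported_on_def)
    then show ?thesis using s LIMSEQ_const_iff by metis
  qed
  moreover have "inner_on S g f = 0" if "g \<in> G" for g
  proof -
    have "(\<lambda>k. inner_on S g (s k)) \<longlonglongrightarrow> inner_on S g f"
      unfolding inner_on_def using s by (intro tendsto_intros) auto
    moreover have "inner_on S g (s k) = 0" for k
      using s that by (auto simp: perp_on_def)
    ultimately show ?thesis by (simp add: LIMSEQ_const_iff)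
  qed
  ultimately show "f \<in> perp_on S G" by (auto simp: perp_on_def supported_on_def)
qed

lemma inner_on_indicator:
  assumes "finite S" "u \<in> S"
  shows "inner_on S (indicator {u}) g = g u"
proof -
  have "inner_on S (indicator {u}) g = (\<Sum>v\<in>S. if v = u then g v else 0)"
    unfolding inner_on_def by (intro sum.cong) (auto simp: indicator_def)
  with assms show ?thesis by simp
qed

lemma inner_on_cnj: "inner_on S g f = cnj (inner_on S f g)"
  by (simp add: inner_on_def mult.commute)

lemma ell2_finite_support:
  assumes "finite S" "f \<in> supported_on S"
  shows "f \<in> ell2"
proof -
  have "(\<lambda>v. (cmod (f v))\<^sup>2) summable_on S" using assms(1) by simp
  moreover have "(\<lambda>v. (cmod (f v))\<^sup>2) summable_on UNIV \<longleftrightarrow> (\<lambda>v. (cmod (f v))\<^sup>2) summable_on S"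
    using assms(2) by (intro summable_on_cong_neutral) (auto simp: supported_on_def)
  ultimately show ?thesis unfolding ell2_def by simp
qed

lemma l2inner_supported:
  assumes "finite S" "f \<in> supported_on S \<or> g \<in> supported_on S"
  shows "l2inner f g = inner_on S f g"
  unfolding l2inner_def inner_on_def using assms
  by (subst infsum_cong_neutral[where T = S]) (auto simp: supported_on_def)

lemma l2inner_indicator:
  assumes "finite S"
  shows "l2inner (indicator S) g = sum g S"
  using l2inner_supported[OF assms, of "indicator S" g]
  by (simp add: supported_on_def inner_on_def)

lemma ell2_add:
  assumes "f \<in> ell2" "g \<in> ell2"
  shows "(\<lambda>v. f v + g v) \<in> ell2"
proof -
  have "(\<lambda>v. 2 * (cmod (f v))\<^sup>2 + 2 * (cmod (g v))\<^sup>2) summable_on UNIV"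
    using assms unfolding ell2_def by (intro summable_on_add summable_on_cmult_right) auto
  moreover have "(cmod (f v + g v))\<^sup>2 \<le> 2 * (cmod (f v))\<^sup>2 + 2 * (cmod (g v))\<^sup>2" for v
  proof -
    have "(cmod (f v + g v))\<^sup>2 \<le> (cmod (f v) + cmod (g v))\<^sup>2"
      by (simp add: norm_triangle_ineq power_mono)
    also have "\<dots> \<le> 2 * (cmod (f v))\<^sup>2 + 2 * (cmod (g v))\<^sup>2"
      using sum_squares_bound[of "cmod (f v)" "cmod (g v)"] by (simp add: power2_sum)
    finally show ?thesis .
  qed
  ultimately show ?thesis
    unfolding ell2_def by (auto intro: summable_on_comparison_test)
qed

lemma ell2_scale:
  assumes "f \<in> ell2"
  shows "(\<lambda>v. c * f v) \<in> ell2"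
proof -
  have "(\<lambda>v. (cmod c)\<^sup>2 * (cmod (f v))\<^sup>2) summable_on UNIV"
    using assms unfolding ell2_def by (intro summable_on_cmult_right) auto
  then show ?thesis unfolding ell2_def by (simp add: norm_mult power_mult_distrib)
qed

lemma ell2_diff: "f \<in> ell2 \<Longrightarrow> g \<in> ell2 \<Longrightarrow> (\<lambda>v. f v - g v) \<in> ell2"
  using ell2_add[of f "\<lambda>v. -1 * g v"] ell2_scale[of g "-1"] by simp

lemma linear_subspace_ell2: "linear_subspace ell2"
  using ell2_finite_support[of "{}" "\<lambda>v. 0"] ell2_add ell2_scale
  by (auto simp: linear_subspace_def supported_on_def)

lemma ell2I_bounded_sums:
  assumes "\<And>F. finite F \<Longrightarrow> (\<Sum>v\<in>F. (cmod (f v))\<^sup>2) \<le> B"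
  shows "f \<in> ell2"
  unfolding ell2_def mem_Collect_eq
  by (intro nonneg_bdd_above_summable_on bdd_aboveI2[of _ _ B]) (auto simp: assms)

lemma sum_le_infsum_ell2:
  assumes "f \<in> ell2" "finite F"
  shows "(\<Sum>v\<in>F. (cmod (f v))\<^sup>2) \<le> infsum (\<lambda>v. (cmod (f v))\<^sup>2) UNIV"
  using assms unfolding ell2_def by (intro finite_sum_le_infsum) auto

lemma summable_cnj_mult:
  assumes "f \<in> ell2" "g \<in> ell2"
  shows "(\<lambda>v. cnj (f v) * g v) summable_on UNIV"
proof (rule abs_summable_summable)
  have "(\<lambda>v. (cmod (f v))\<^sup>2 + (cmod (g v))\<^sup>2) summable_on UNIV"
    using assms unfolding ell2_def by (intro summable_on_add) auto
  moreover have "cmod (f v) * cmod (g v) \<le> (cmod (f v))\<^sup>2 + (cmod (g v))\<^sup>2" for v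
  proof -
    have "2 * (cmod (f v) * cmod (g v)) \<le> (cmod (f v))\<^sup>2 + (cmod (g v))\<^sup>2"
      using sum_squares_bound[of "cmod (f v)" "cmod (g v)"] by (simp add: mult.assoc)
    moreover have "0 \<le> cmod (f v) * cmod (g v)" by simp
    ultimately show ?thesis by linarith
  qed
  ultimately show "(\<lambda>v. norm (cnj (f v) * g v)) summable_on UNIV"
    by (auto simp: norm_mult intro: summable_on_comparison_test)
qed

lemma norm_le_l2norm:
  assumes "f \<in> ell2"
  shows "cmod (f v) \<le> l2norm f"
  using sum_le_infsum_ell2[OF assms, of "{v}"] unfolding l2norm_def by (simp add: real_le_rsqrt)

lemma l2_tendsto_imp_pointwise:
  assumes "\<And>k. s k \<in> ell2" "f \<in> ell2" "(\<lambda>k. l2norm (\<lambda>v. s k v - f v)) \<longlonglongrightarrow> 0"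
  shows "(\<lambda>k. s k v) \<longlonglongrightarrow> f v"
proof -
  have "norm (s k v - f v) \<le> l2norm (\<lambda>v. s k v - f v)" for k
    using assms(1,2) by (intro norm_le_l2norm ell2_diff)
  then have "(\<lambda>k. s k v - f v) \<longlonglongrightarrow> 0"
    by (intro Lim_null_comparison[OF always_eventually assms(3)]) simp
  then show ?thesis by (simp add: LIM_zero_iff)
qed

lemma tendsto_sum_exhausting:
  assumes "(h has_sum s) UNIV" "\<And>R. finite (B R)"
    and "\<And>X. finite X \<Longrightarrow> eventually (\<lambda>R. X \<subseteq> B R) sequentially"
  shows "(\<lambda>R. sum h (B R)) \<longlonglongrightarrow> s"
proof -
  have "filterlim B (finite_subsets_at_top UNIV) sequentially"
    unfolding filterlim_finite_subsets_at_top using assms(2,3) by simp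
  with assms(1) show ?thesis
    unfolding has_sum_def by (rule filterlim_compose)
qed

lemma closed_subspaceI:
  assumes "linear_subspace W" "W \<subseteq> ell2"
    and "\<And>s f. (\<And>k. s k \<in> W) \<Longrightarrow> f \<in> ell2 \<Longrightarrow>
      (\<lambda>k. l2norm (\<lambda>v. s k v - f v)) \<longlonglongrightarrow> 0 \<Longrightarrow> f \<in> W"
  shows "closed_subspace W"
  using assms unfolding closed_subspace_def linear_subspace_def by blast

lemma closed_subspace_linear: "closed_subspace W \<Longrightarrow> linear_subspace W"
  by (simp add: closed_subspace_def linear_subspace_def)

lemma closed_subspace_subset_ell2: "closed_subspace W \<Longrightarrow> W \<subseteq> ell2"
  by (simp add: closed_subspace_def)

lemma closed_subspace_limit:
  "closed_subspace W \<Longrightarrow> (\<And>k. s k \<in> W) \<Longrightarrow> f \<in> ell2 \<Longrightarrow>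
    (\<lambda>k. l2norm (\<lambda>v. s k v - f v)) \<longlonglongrightarrow> 0 \<Longrightarrow> f \<in> W"
  unfolding closed_subspace_def by blast

lemma closed_subspace_pointwise_closed:
  assumes "linear_subspace W" "W \<subseteq> ell2" "pointwise_closed W"
  shows "closed_subspace W"
proof (rule closed_subspaceI[OF assms(1,2)])
  fix s f assume s: "\<And>k. s k \<in> W" and "f \<in> ell2" "(\<lambda>k. l2norm (\<lambda>v. s k v - f v)) \<longlonglongrightarrow> 0"
  then have "(\<lambda>k. s k v) \<longlonglongrightarrow> f v" for v
    using assms(2) by (intro l2_tendsto_imp_pointwise) auto
  with s show "f \<in> W" by (rule pointwise_closedD[OF assms(3)])
qed

lemma closed_subspace_ell2: "closed_subspace ell2"
  by (rule closed_subspaceI[OF linear_subspace_ell2]) auto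

lemma closed_subspace_Inter:
  assumes "\<F> \<noteq> {}" "\<And>W. W \<in> \<F> \<Longrightarrow> closed_subspace W"
  shows "closed_subspace (\<Inter>\<F>)"
proof (rule closed_subspaceI)
  have "linear_subspace W" if "W \<in> \<F>" for W
    using assms(2)[OF that] by (rule closed_subspace_linear)
  then show "linear_subspace (\<Inter>\<F>)"
    unfolding linear_subspace_def by (intro conjI ballI allI InterI) auto
  show "\<Inter>\<F> \<subseteq> ell2" using assms closed_subspace_subset_ell2 by blast
next
  fix s f assume s: "\<And>k. s k \<in> \<Inter>\<F>" and f: "f \<in> ell2"
    and lim: "(\<lambda>k. l2norm (\<lambda>v. s k v - f v)) \<longlonglongrightarrow> 0"
  show "f \<in> \<Inter>\<F>"
  proof
    fix W assume "W \<in> \<F>"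
    with s show "f \<in> W" by (intro closed_subspace_limit[OF assms(2) _ f lim]) auto
  qed
qed

lemma closed_subspace_closed_span: "S \<subseteq> ell2 \<Longrightarrow> closed_subspace (closed_span S)"
  unfolding closed_span_def using closed_subspace_ell2 by (intro closed_subspace_Inter) auto

lemma closed_span_upper: "S \<subseteq> closed_span S"
  unfolding closed_span_def by blast

lemma closed_span_least: "closed_subspace W \<Longrightarrow> S \<subseteq> W \<Longrightarrow> closed_span S \<subseteq> W"
  unfolding closed_span_def by blast

lemma closed_span_eq_ell2I:
  assumes "S \<subseteq> ell2" "\<And>W. closed_subspace W \<Longrightarrow> S \<subseteq> W \<Longrightarrow> ell2 \<subseteq> W"
  shows "closed_span S = ell2"
  using closed_span_least[OF closed_subspace_ell2 assms(1)]
    assms(2)[OF closed_subspace_closed_span[OF assms(1)] closed_span_upper] by blast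

section \<open>Spherically symmetric trees\<close>

locale spherically_symmetric_tree =
  fixes par :: "'v \<Rightarrow> 'v" and v0 :: 'v and d :: "nat \<Rightarrow> nat"
  assumes reaches_root: "\<exists>n. (par ^^ n) v = v0"
    and finite_children: "finite (children par v0 v)"
    and card_children: "card (children par v0 v) = d (depth par v0 v)"
    and degree_pos: "0 < d r"
    and degree_bounded: "\<exists>M. \<forall>r. d r \<le> M"
begin

abbreviation "dep \<equiv> depth par v0"
abbreviation "ch \<equiv> children par v0"
abbreviation "H \<equiv> Hop par v0"
abbreviation "level r \<equiv> {v. dep v = r}"

lemma funpow_depth: "(par ^^ dep v) v = v0"
  unfolding depth_def by (rule LeastI_ex) (rule reaches_root)

lemma depth_le: "(par ^^ n) v = v0 \<Longrightarrow> dep v \<le> n"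
  unfolding depth_def by (rule Least_le)

lemma depth_eq_0_iff: "dep v = 0 \<longleftrightarrow> v = v0"
  using funpow_depth[of v] depth_le[of 0 v0] by auto

lemma depth_par:
  assumes "v \<noteq> v0"
  shows "dep v = Suc (dep (par v))"
proof -
  obtain j where j: "dep v = Suc j"
    using assms depth_eq_0_iff by (cases "dep v") auto
  have "(par ^^ j) (par v) = v0"
    using funpow_depth[of v] j by (simp add: funpow_swap1)
  moreover have "(par ^^ Suc (dep (par v))) v = v0"
    using funpow_depth[of "par v"] by (simp add: funpow_swap1)
  ultimately show ?thesis
    using depth_le j by (metis Suc_le_mono le_antisym)
qed

lemma children_iff: "w \<in> ch u \<longleftrightarrow> w \<noteq> v0 \<and> par w = u"
  by (simp add: children_def)

lemma depth_child: "w \<in> ch u \<Longrightarrow> dep w = Suc (dep u)"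
  using depth_par children_iff by auto

lemma level_Suc: "level (Suc r) = (\<Union>u\<in>level r. ch u)"
proof (intro equalityI subsetI)
  fix v assume v: "v \<in> level (Suc r)"
  then have "v \<noteq> v0" using depth_eq_0_iff[of v] by auto
  with v show "v \<in> (\<Union>u\<in>level r. ch u)"
    using depth_par[of v] by (auto simp: children_iff)
qed (auto simp: depth_child)

lemma finite_level: "finite (level r)"
  by (induction r) (auto simp: depth_eq_0_iff level_Suc finite_children)

lemma finite_ball: "finite {v. dep v < R}"
proof -
  have "{v. dep v < R} = (\<Union>r<R. level r)" by auto
  then show ?thesis using finite_level by simp
qed

lemma depth_funpow_par: "j \<le> dep v \<Longrightarrow> dep ((par ^^ j) v) = dep v - j"
proof (induction j arbitrary: v)
  case (Suc j)
  then have "v \<noteq> v0" using depth_eq_0_iff[of v] by auto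
  then show ?case
    using Suc.IH[of "par v"] Suc.prems depth_par by (simp add: funpow_swap1)
qed simp

lemma exists_descendant: "\<exists>w. dep w = dep u + j \<and> (par ^^ j) w = u"
proof (induction j)
  case (Suc j)
  then obtain w where w: "dep w = dep u + j" "(par ^^ j) w = u" by blast
  have "ch w \<noteq> {}"
    using card_children[of w] degree_pos[of "dep w"] by auto
  then obtain c where "c \<in> ch w" by blast
  then show ?case
    using w depth_child children_iff by (intro exI[of _ c]) (simp add: funpow_swap1)
qed simp

lemma H_apply: "H f v = (if v = v0 then 0 else f (par v))"
  by (simp add: Hop_def)

lemma Hpow_apply: "(H ^^ j) f v = (if j \<le> dep v then f ((par ^^ j) v) else 0)"
proof (induction j arbitrary: v)
  case (Suc j)
  show ?case
    using Suc.IH[of "par v"] depth_par[of v] depth_eq_0_iff[of v]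
    by (auto simp: H_apply funpow_swap1)
qed simp

lemma Hpow_zero: "(H ^^ j) (\<lambda>v. 0) = (\<lambda>v. 0)"
  and Hpow_add: "(H ^^ j) (\<lambda>v. f v + g v) = (\<lambda>v. (H ^^ j) f v + (H ^^ j) g v)"
  and Hpow_scale: "(H ^^ j) (\<lambda>v. c * f v) = (\<lambda>v. c * (H ^^ j) f v)"
  by (auto simp: Hpow_apply fun_eq_iff)

lemma H_zero: "H (\<lambda>v. 0) = (\<lambda>v. 0)"
  and H_add: "H (\<lambda>v. f v + g v) = (\<lambda>v. H f v + H g v)"
  and H_scale: "H (\<lambda>v. c * f v) = (\<lambda>v. c * H f v)"
  using Hpow_zero[of 1] Hpow_add[of 1] Hpow_scale[of 1] by simp_all

definition descendant :: "nat \<Rightarrow> 'v \<Rightarrow> 'v" where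
  "descendant j u = (SOME w. dep w = dep u + j \<and> (par ^^ j) w = u)"

lemma Hpow_descendant: "(H ^^ j) f (descendant j u) = f u"
proof -
  have "dep (descendant j u) = dep u + j \<and> (par ^^ j) (descendant j u) = u"
    unfolding descendant_def by (rule someI_ex) (rule exists_descendant)
  then show ?thesis by (simp add: Hpow_apply)
qed

lemma pointwise_closed_Hpow_image:
  assumes "pointwise_closed C"
  shows "pointwise_closed ((H ^^ j) ` C)"
  unfolding pointwise_closed_def
proof (intro allI impI)
  fix s f assume s: "(\<forall>k. s k \<in> (H ^^ j) ` C) \<and> (\<forall>v. (\<lambda>k. s k v) \<longlonglongrightarrow> f v)"
  then have "\<forall>k. \<exists>a. a \<in> C \<and> s k = (H ^^ j) a" by blast
  then obtain a where a: "\<And>k. a k \<in> C" "\<And>k. s k = (H ^^ j) (a k)" by metis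
  \<comment> \<open>\<open>g \<mapsto> g \<circ> descendant j\<close> is a left inverse of \<open>H ^^ j\<close>\<close>
  define b where "b u = f (descendant j u)" for u
  have "(\<lambda>k. a k u) \<longlonglongrightarrow> b u" for u
  proof -
    have "(\<lambda>k. s k (descendant j u)) \<longlonglongrightarrow> f (descendant j u)" using s by blast
    then show ?thesis by (simp add: b_def a(2) Hpow_descendant)
  qed
  then have "b \<in> C" by (rule pointwise_closedD[OF assms a(1)])
  moreover have "f v = (H ^^ j) b v" for v
  proof -
    have "(\<lambda>k. s k v) \<longlonglongrightarrow> (H ^^ j) b v"
      unfolding a(2) Hpow_apply using \<open>\<And>u. (\<lambda>k. a k u) \<longlonglongrightarrow> b u\<close> by simp
    with s show ?thesis using LIMSEQ_unique by blast
  qed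
  ultimately show "f \<in> (H ^^ j) ` C" by auto
qed

definition Hstar :: "('v \<Rightarrow> complex) \<Rightarrow> 'v \<Rightarrow> complex" where
  "Hstar f u = (\<Sum>w\<in>ch u. f w)"

lemma adjacency_eq: "adjacency par v0 f = (\<lambda>v. H f v + Hstar f v)"
  by (simp add: adjacency_def Hop_def Hstar_def)

lemma Hstar_H: "Hstar (H f) u = of_nat (d (dep u)) * f u"
proof -
  have "Hstar (H f) u = (\<Sum>w\<in>ch u. f u)"
    unfolding Hstar_def by (intro sum.cong refl) (auto simp: H_apply children_iff)
  then show ?thesis by (simp add: card_children)
qed

lemma inner_on_level_Suc_H: "inner_on (level (Suc r)) (H f) g = inner_on (level r) f (Hstar g)"
proof -
  have "inner_on (level (Suc r)) (H f) g = (\<Sum>u\<in>level r. \<Sum>w\<in>ch u. cnj (H f w) * g w)"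
    unfolding inner_on_def level_Suc
    by (rule sum.UNION_disjoint) (auto simp: finite_level finite_children children_iff)
  also have "\<dots> = (\<Sum>u\<in>level r. cnj (f u) * Hstar g u)"
    unfolding Hstar_def sum_distrib_left
    by (intro sum.cong refl) (auto simp: H_apply children_iff)
  finally show ?thesis by (simp add: inner_on_def)
qed

lemma inner_on_level_Suc_H_H:
  "inner_on (level (Suc r)) (H f) (H g) = of_nat (d r) * inner_on (level r) f g"
  unfolding inner_on_level_Suc_H unfolding inner_on_def sum_distrib_left
  by (rule sum.cong) (simp_all add: Hstar_H mult.left_commute)

lemma H_supported: "f \<in> supported_on (level r) \<Longrightarrow> H f \<in> supported_on (level (Suc r))"
  by (auto simp: supported_on_def H_apply dest: depth_par)

lemma Hstar_supported: "f \<in> supported_on (level (Suc r)) \<Longrightarrow> Hstar f \<in> supported_on (level r)"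
  by (auto simp: supported_on_def Hstar_def depth_child)

lemma supported_level_ell2: "supported_on (level r) \<subseteq> ell2"
  using ell2_finite_support[OF finite_level] by blast

lemma ellS_eq_supported_on: "ellS par v0 r = supported_on (level r)"
  using supported_level_ell2 by (auto simp: ellS_def supported_on_def)

section \<open>The spaces U n r\<close>

definition Udiag :: "nat \<Rightarrow> ('v \<Rightarrow> complex) set" where
  "Udiag n = Ulist par v0 n ! n"

lemma length_Ulist: "length (Ulist par v0 m) = Suc m"
  by (induction m) auto

lemma Ulist_nth: "k \<le> m \<Longrightarrow> Ulist par v0 m ! k = Udiag k"
proof (induction m)
  case (Suc m)
  then show ?case
    by (cases "k = Suc m") (simp_all add: Udiag_def nth_append length_Ulist)
qed (simp add: Udiag_def)

lemma Usp_eq: "Usp par v0 n r = (H ^^ (r - n)) ` Udiag n"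
  by (simp add: Usp_def Udiag_def)

(* U n r is the paper's U_{n,r} with the convention U_{n,r} = 0 for r < n,
   where Usp n r is a junk value (truncated subtraction r - n). *)
definition U :: "nat \<Rightarrow> nat \<Rightarrow> ('v \<Rightarrow> complex) set" where
  "U n r = (if n \<le> r then Usp par v0 n r else {\<lambda>v. 0})"

lemma U_diag: "U n n = Udiag n"
  by (simp add: U_def Usp_eq)

lemma U_Suc:
  assumes "n \<noteq> Suc r"
  shows "U n (Suc r) = H ` U n r"
proof (cases "n \<le> r")
  case True
  then have "H ^^ (Suc r - n) = H \<circ> H ^^ (r - n)"
    by (simp add: Suc_diff_le)
  with True show ?thesis by (simp add: U_def Usp_eq image_comp)
qed (use assms in \<open>simp add: U_def H_zero\<close>)

lemma Udiag_eq_perp_on: "Udiag n = perp_on (level n) (\<Union>k<n. U k n)"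
proof (cases n)
  case 0
  then show ?thesis by (simp add: Udiag_def ellS_eq_supported_on perp_on_def)
next
  case (Suc m)
  have U_eq: "(H ^^ (n - k)) ` (Ulist par v0 m ! k) = U k n" if "k \<le> m" for k
    using that by (simp add: Suc Ulist_nth U_def Usp_eq)
  have l2inner_eq: "l2inner g f = inner_on (level n) g f" if "f \<in> supported_on (level n)" for f g
    using that by (intro l2inner_supported finite_level) simp
  have "Udiag n = {f \<in> ellS par v0 n. \<forall>k\<le>m. \<forall>g \<in> U k n. l2inner g f = 0}"
    unfolding Udiag_def Suc by (simp add: nth_append length_Ulist U_eq[unfolded Suc])
  also have "\<dots> = perp_on (level n) (\<Union>k<n. U k n)"
    unfolding ellS_eq_supported_on perp_on_def using l2inner_eq by (auto simp: Suc less_Suc_eq_le)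
  finally show ?thesis .
qed

lemma U_below: "r < n \<Longrightarrow> U n r = {\<lambda>v. 0}"
  by (simp add: U_def)

lemma mem_Udiag_iff:
  "f \<in> Udiag n \<longleftrightarrow>
    f \<in> supported_on (level n) \<and> (\<forall>k<n. \<forall>g\<in>U k n. inner_on (level n) g f = 0)"
  by (auto simp: Udiag_eq_perp_on[of n] perp_on_def)

lemma U_subset_supported: "U n r \<subseteq> supported_on (level r)"
proof (cases "n \<le> r")
  case True
  have "(H ^^ (r - n)) f \<in> supported_on (level r)" if "f \<in> Udiag n" for f
    using that True by (auto simp: mem_Udiag_iff supported_on_def Hpow_apply depth_funpow_par)
  with True show ?thesis by (auto simp: U_def Usp_eq)
qed (simp add: U_def supported_on_def)

lemma linear_subspace_Udiag: "linear_subspace (Udiag n)"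
  unfolding Udiag_eq_perp_on[of n] by (rule linear_subspace_perp_on)

lemma pointwise_closed_Udiag: "pointwise_closed (Udiag n)"
  unfolding Udiag_eq_perp_on[of n] by (rule pointwise_closed_perp_on[OF finite_level])

lemma linear_subspace_U: "linear_subspace (U n r)"
proof (cases "n \<le> r")
  case True
  then show ?thesis
    unfolding U_def Usp_eq
    by (simp add: linear_subspace_image[OF linear_subspace_Udiag Hpow_zero Hpow_add Hpow_scale])
qed (simp add: U_def linear_subspace_def)

lemma pointwise_closed_U: "pointwise_closed (U n r)"
proof (cases "n \<le> r")
  case True
  then show ?thesis
    unfolding U_def Usp_eq by (simp add: pointwise_closed_Hpow_image pointwise_closed_Udiag)
qed (simp add: U_def pointwise_closed_zero)

lemma U_orth:
  assumes "n \<noteq> n'" "f \<in> U n r" "g \<in> U n' r"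
  shows "inner_on (level r) f g = 0"
  using assms
proof (induction r arbitrary: n n' f g)
  case 0
  then show ?case by (cases n; cases n') (auto simp: U_below inner_on_def)
next
  case (Suc r)
  consider "Suc r < n \<or> Suc r < n'" | "n = Suc r" "n' < Suc r" | "n' = Suc r" "n < Suc r"
    | "n \<le> r" "n' \<le> r"
    using Suc.prems(1) by linarith
  then show ?case
  proof cases
    case 1
    with Suc.prems show ?thesis by (auto simp: U_below inner_on_def)
  next
    case 2
    with Suc.prems have "inner_on (level (Suc r)) g f = 0"
      by (auto simp: U_diag mem_Udiag_iff)
    then show ?thesis by (simp add: inner_on_cnj[of _ f])
  next
    case 3
    with Suc.prems show ?thesis by (auto simp: U_diag mem_Udiag_iff)
  next
    case 4
    with Suc.prems obtain x y where "x \<in> U n r" "y \<in> U n' r" "f = H x" "g = H y"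
      by (auto simp: U_Suc)
    with Suc.IH Suc.prems(1) show ?thesis by (simp add: inner_on_level_Suc_H_H)
  qed
qed

lemma H_U: "f \<in> U n r \<Longrightarrow> H f \<in> U n (Suc r)"
  by (cases "n = Suc r")
    (auto simp: U_below H_zero U_Suc intro: linear_subspace_zero[OF linear_subspace_U])

lemma supported_level_subset:
  assumes "linear_subspace C" "\<And>n. U n r \<subseteq> C"
  shows "supported_on (level r) \<subseteq> C"
  using assms
proof (induction r arbitrary: C)
  case 0
  have "supported_on (level 0) \<subseteq> U 0 0" by (auto simp: U_diag mem_Udiag_iff)
  with "0.prems"(2)[of 0] show ?case by blast
next
  case (Suc m)
  show ?case
  proof
    fix f assume f: "f \<in> supported_on (level (Suc m))"
    define g where "g u = Hstar f u / of_nat (d m)" for u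
    define h where "h v = f v - H g v" for v
    have g: "g \<in> supported_on (level m)"
      using Hstar_supported[OF f] by (auto simp: g_def supported_on_def)
    have "U n m \<subseteq> {x. H x \<in> C}" for n
      using H_U Suc.prems(2) by blast
    then have "supported_on (level m) \<subseteq> {x. H x \<in> C}"
      by (intro Suc.IH linear_subspace_vimage[OF Suc.prems(1) H_zero H_add H_scale])
    then have "H g \<in> C" using g by blast
    have Hstar_h: "Hstar h u = 0" for u
    proof -
      have "Hstar h u = Hstar f u - Hstar (H g) u"
        unfolding h_def Hstar_def by (rule sum_subtractf)
      also have "\<dots> = Hstar f u - of_nat (d (dep u)) * g u"
        by (simp add: Hstar_H)
      finally show ?thesis
        using g Hstar_supported[OF f] degree_pos[of m]
        by (cases "dep u = m") (auto simp: g_def supported_on_def)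
    qed
    have "inner_on (level (Suc m)) x h = 0" if x: "x \<in> U k (Suc m)" and k: "k < Suc m" for x k
    proof -
      obtain y where "x = H y" using x k U_Suc[of k m] by auto
      then show ?thesis using inner_on_level_Suc_H[of m y h] by (simp add: inner_on_def Hstar_h)
    qed
    moreover have "h \<in> supported_on (level (Suc m))"
      using f H_supported[OF g] by (auto simp: h_def supported_on_def)
    ultimately have "h \<in> U (Suc m) (Suc m)"
      by (auto simp: U_diag mem_Udiag_iff)
    then have "h \<in> C" using Suc.prems(2) by blast
    have "f = (\<lambda>v. H g v + h v)" by (simp add: h_def)
    with \<open>H g \<in> C\<close> \<open>h \<in> C\<close> show "f \<in> C"
      using linear_subspace_add[OF Suc.prems(1)] by metis
  qed
qed

lemma Hstar_Udiag_Suc: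
  assumes "f \<in> Udiag (Suc m)"
  shows "Hstar f = (\<lambda>u. 0)"
proof
  fix u
  show "Hstar f u = 0"
  proof (cases "dep u = m")
    case True
    have "linear_subspace {x. H x \<in> {y. inner_on (level (Suc m)) y f = 0}}"
      by (rule linear_subspace_vimage[OF linear_subspace_inner_on_eq_0 H_zero H_add H_scale])
    then have "linear_subspace {x. inner_on (level (Suc m)) (H x) f = 0}" by simp
    moreover have "U n m \<subseteq> {x. inner_on (level (Suc m)) (H x) f = 0}" for n
      using assms H_U[of _ n m] by (cases "n < Suc m") (auto simp: mem_Udiag_iff U_below H_zero inner_on_def)
    ultimately have "supported_on (level m) \<subseteq> {x. inner_on (level (Suc m)) (H x) f = 0}"
      by (rule supported_level_subset)
    moreover have "indicator {u} \<in> supported_on (level m)"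
      using True by (auto simp: supported_on_def indicator_def)
    ultimately have "inner_on (level (Suc m)) (H (indicator {u})) f = 0"
      by blast
    then have "inner_on (level m) (indicator {u}) (Hstar f) = 0"
      by (simp add: inner_on_level_Suc_H)
    with True show ?thesis by (simp add: inner_on_indicator finite_level)
  next
    case False
    with assms show ?thesis
      by (auto simp: Hstar_def mem_Udiag_iff supported_on_def depth_child intro!: sum.neutral)
  qed
qed

lemma Hstar_U:
  assumes "f \<in> U n (Suc r)"
  shows "Hstar f \<in> U n r"
proof (cases "n = Suc r")
  case True
  with assms show ?thesis by (simp add: U_diag U_below Hstar_Udiag_Suc)
next
  case False
  with assms obtain x where x: "x \<in> U n r" "f = H x" by (auto simp: U_Suc)
  have "Hstar (H x) u = of_nat (d r) * x u" for u
    using U_subset_supported x(1) by (cases "dep u = r") (auto simp: Hstar_H supported_on_def)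
  with x have "Hstar f = (\<lambda>u. of_nat (d r) * x u)" by auto
  with x show ?thesis by (simp add: linear_subspace_scale[OF linear_subspace_U])
qed

lemma Usp_eq_U: "n \<le> r \<Longrightarrow> Usp par v0 n r = U n r"
  by (simp add: U_def)

lemma U_subset_ell2: "U n r \<subseteq> ell2"
  using U_subset_supported supported_level_ell2 by blast

lemma closed_subspace_Usp: "n \<le> r \<Longrightarrow> closed_subspace (Usp par v0 n r)"
  by (simp add: Usp_eq_U closed_subspace_pointwise_closed linear_subspace_U
      U_subset_ell2 pointwise_closed_U)

lemma orth_Usp:
  assumes "n \<le> r" "n' \<le> r'" "(n, r) \<noteq> (n', r')"
  shows "orth (Usp par v0 n r) (Usp par v0 n' r')"
  unfolding orth_def
proof (intro ballI)
  fix f g assume "f \<in> Usp par v0 n r" "g \<in> Usp par v0 n' r'"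
  then have f: "f \<in> U n r" and g: "g \<in> U n' r'"
    using assms by (simp_all add: Usp_eq_U)
  then have "l2inner f g = inner_on (level r) f g"
    using U_subset_supported by (intro l2inner_supported finite_level) blast
  also have "\<dots> = 0"
  proof (cases "r = r'")
    case True
    with assms f g show ?thesis by (auto intro: U_orth)
  next
    case False
    with g show ?thesis
      using U_subset_supported by (force simp: inner_on_def supported_on_def)
  qed
  finally show "l2inner f g = 0" .
qed

lemma Usp_subset_ell2: "Usp par v0 n r \<subseteq> ell2"
proof (cases "n \<le> r")
  case False
  then have "Usp par v0 n r = U n n" by (simp add: U_def Usp_eq)
  then show ?thesis using U_subset_ell2 by simp
qed (use U_subset_ell2 in \<open>simp add: Usp_eq_U\<close>)

section \<open>The spaces V n\<close>

lemma card_children_bounded: obtains M where "\<And>u. card (ch u) \<le> M"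
  using degree_bounded card_children by metis

lemma H_ell2:
  assumes f: "f \<in> ell2"
  shows "H f \<in> ell2"
proof -
  obtain M where M: "\<And>u. card (ch u) \<le> M" using card_children_bounded by blast
  show ?thesis
  proof (rule ell2I_bounded_sums)
    fix F :: "'v set" assume F: "finite F"
    define F' where "F' = F - {v0}"
    have "(\<Sum>v\<in>F. (cmod (H f v))\<^sup>2) = (\<Sum>v\<in>F'. (cmod (f (par v)))\<^sup>2)"
      unfolding F'_def using F by (intro sum.mono_neutral_cong_right) (auto simp: H_apply)
    also have "\<dots> = (\<Sum>u\<in>par ` F'. \<Sum>v\<in>{v\<in>F'. par v = u}. (cmod (f u))\<^sup>2)"
      using F by (subst sum.image_gen[of F']) (auto simp: F'_def intro!: sum.cong)
    also have "\<dots> \<le> (\<Sum>u\<in>par ` F'. real M * (cmod (f u))\<^sup>2)"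
    proof (rule sum_mono)
      fix u
      have "{v\<in>F'. par v = u} \<subseteq> ch u" by (auto simp: F'_def children_iff)
      then have "card {v\<in>F'. par v = u} \<le> M"
        using M[of u] card_mono[OF finite_children] le_trans by blast
      then show "(\<Sum>v\<in>{v\<in>F'. par v = u}. (cmod (f u))\<^sup>2) \<le> real M * (cmod (f u))\<^sup>2"
        by (simp add: mult_right_mono)
    qed
    also have "\<dots> \<le> real M * infsum (\<lambda>v. (cmod (f v))\<^sup>2) UNIV"
      unfolding sum_distrib_left[symmetric] using F
      by (intro mult_left_mono sum_le_infsum_ell2[OF f]) (auto simp: F'_def)
    finally show "(\<Sum>v\<in>F. (cmod (H f v))\<^sup>2) \<le> real M * infsum (\<lambda>v. (cmod (f v))\<^sup>2) UNIV" .
  qed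
qed

lemma Hstar_ell2:
  assumes f: "f \<in> ell2"
  shows "Hstar f \<in> ell2"
proof -
  obtain M where M: "\<And>u. card (ch u) \<le> M" using card_children_bounded by blast
  show ?thesis
  proof (rule ell2I_bounded_sums)
    fix F :: "'v set" assume F: "finite F"
    have "(cmod (Hstar f u))\<^sup>2 \<le> real M * (\<Sum>w\<in>ch u. (cmod (f w))\<^sup>2)" for u
    proof -
      have "(cmod (Hstar f u))\<^sup>2 \<le> (\<Sum>w\<in>ch u. 1 * cmod (f w))\<^sup>2"
        unfolding Hstar_def by (simp add: norm_sum power_mono)
      also have "\<dots> \<le> (\<Sum>w\<in>ch u. 1\<^sup>2) * (\<Sum>w\<in>ch u. (cmod (f w))\<^sup>2)"
        by (rule Cauchy_Schwarz_ineq_sum)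
      also have "\<dots> \<le> real M * (\<Sum>w\<in>ch u. (cmod (f w))\<^sup>2)"
        using M[of u] by (intro mult_right_mono) (auto intro: sum_nonneg)
      finally show ?thesis .
    qed
    then have "(\<Sum>u\<in>F. (cmod (Hstar f u))\<^sup>2) \<le> real M * (\<Sum>u\<in>F. \<Sum>w\<in>ch u. (cmod (f w))\<^sup>2)"
      by (simp add: sum_distrib_left sum_mono)
    also have "(\<Sum>u\<in>F. \<Sum>w\<in>ch u. (cmod (f w))\<^sup>2) = (\<Sum>w\<in>(\<Union>u\<in>F. ch u). (cmod (f w))\<^sup>2)"
      using F by (intro sum.UNION_disjoint[symmetric]) (auto simp: finite_children children_iff)
    also have "real M * \<dots> \<le> real M * infsum (\<lambda>v. (cmod (f v))\<^sup>2) UNIV"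
      using F by (intro mult_left_mono sum_le_infsum_ell2[OF f]) (auto simp: finite_children)
    finally show "(\<Sum>u\<in>F. (cmod (Hstar f u))\<^sup>2) \<le> real M * infsum (\<lambda>v. (cmod (f v))\<^sup>2) UNIV" .
  qed
qed

lemma adjoint_eq_Hstar:
  assumes "is_adjoint H L" "g \<in> ell2"
  shows "L g = Hstar g"
proof
  fix u
  have "H (indicator {u}) = indicator (ch u)"
    by (auto simp: H_apply children_iff indicator_def fun_eq_iff)
  moreover have "indicator {u} \<in> ell2"
    by (rule ell2_finite_support[of "{u}"]) (auto simp: supported_on_def)
  ultimately have "l2inner (indicator (ch u)) g = l2inner (indicator {u}) (L g)"
    using assms unfolding is_adjoint_def by metis
  then show "L g u = Hstar g u"
    by (simp add: l2inner_indicator finite_children Hstar_def)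
qed

definition restr :: "nat \<Rightarrow> ('v \<Rightarrow> complex) \<Rightarrow> 'v \<Rightarrow> complex" where
  "restr r f v = (if dep v = r then f v else 0)"

lemma restr_supported: "restr r f \<in> supported_on (level r)"
  by (simp add: restr_def supported_on_def)

lemma restr_of_supported:
  "f \<in> supported_on (level r) \<Longrightarrow> restr r' f = (if r' = r then f else (\<lambda>v. 0))"
  by (auto simp: restr_def supported_on_def fun_eq_iff)

lemma restr_zero: "restr r (\<lambda>v. 0) = (\<lambda>v. 0)"
  and restr_add: "restr r (\<lambda>v. f v + g v) = (\<lambda>v. restr r f v + restr r g v)"
  and restr_scale: "restr r (\<lambda>v. c * f v) = (\<lambda>v. c * restr r f v)"
  by (auto simp: restr_def fun_eq_iff)

lemma restr_0_H: "restr 0 (H f) = (\<lambda>v. 0)"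
  by (auto simp: restr_def H_apply depth_eq_0_iff fun_eq_iff)

lemma restr_Suc_H: "restr (Suc r) (H f) = H (restr r f)"
  by (auto simp: restr_def H_apply depth_par fun_eq_iff)

lemma restr_Hstar: "restr r (Hstar f) = Hstar (restr (Suc r) f)"
  by (auto simp: restr_def Hstar_def depth_child fun_eq_iff intro!: sum.cong)

lemma tendsto_sum_balls:
  assumes "(h has_sum s) UNIV"
  shows "(\<lambda>R. sum h {v. dep v < R}) \<longlonglongrightarrow> s"
proof (rule tendsto_sum_exhausting[OF assms finite_ball])
  fix X :: "'v set" assume "finite X"
  then obtain k where "\<forall>x\<in>X. dep x < k"
    using finite_nat_bounded[of "dep ` X"] by auto
  then show "eventually (\<lambda>R. X \<subseteq> {v. dep v < R}) sequentially"
    unfolding eventually_sequentially by (intro exI[of _ k]) auto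
qed

lemma sum_ball: "sum h {v. dep v < R} = (\<Sum>r<R. sum h (level r))"
proof -
  have "sum h {v. dep v < R} = sum h (\<Union>r<R. level r)"
    by (intro arg_cong[where f = "sum h"]) auto
  also have "sum h (\<Union>r<R. level r) = (\<Sum>r<R. sum h (level r))"
    by (rule sum.UNION_disjoint) (auto simp: finite_level)
  finally show ?thesis .
qed

lemma tendsto_inner_on_levels:
  assumes "f \<in> ell2" "g \<in> ell2"
  shows "(\<lambda>R. \<Sum>r<R. inner_on (level r) f g) \<longlonglongrightarrow> l2inner f g"
  using tendsto_sum_balls[OF has_sum_infsum[OF summable_cnj_mult[OF assms]]]
  by (simp add: sum_ball inner_on_def l2inner_def)

lemma tendsto_truncation:
  assumes f: "f \<in> ell2"
  shows "(\<lambda>R. l2norm (\<lambda>v. (\<Sum>r<R. restr r f v) - f v)) \<longlonglongrightarrow> 0"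
proof -
  define g where "g = (\<lambda>v. (cmod (f v))\<^sup>2)"
  have g: "g summable_on UNIV" using f by (simp add: ell2_def g_def)
  have "(\<lambda>R. sum g {v. dep v < R}) \<longlonglongrightarrow> infsum g UNIV"
    using g by (intro tendsto_sum_balls has_sum_infsum)
  then have "(\<lambda>R. sqrt (infsum g UNIV - sum g {v. dep v < R})) \<longlonglongrightarrow> sqrt (infsum g UNIV - infsum g UNIV)"
    by (intro tendsto_intros)
  moreover have "l2norm (\<lambda>v. (\<Sum>r<R. restr r f v) - f v) = sqrt (infsum g UNIV - sum g {v. dep v < R})"
    for R
  proof -
    let ?B = "{v. dep v < R}"
    have "(\<Sum>r<R. restr r f v) = (if dep v < R then f v else 0)" for v
      by (simp add: restr_def sum.delta' lessThan_iff flip: sum.inter_filter)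
    then have "infsum (\<lambda>v. (cmod ((\<Sum>r<R. restr r f v) - f v))\<^sup>2) UNIV = infsum g (- ?B)"
      by (intro infsum_cong_neutral) (auto simp: g_def)
    also have "\<dots> = infsum g UNIV - sum g ?B"
      using infsum_Un_disjoint[of g ?B "- ?B"] summable_on_subset[OF g] finite_ball by auto
    finally show ?thesis by (simp add: l2norm_def)
  qed
  ultimately show ?thesis by simp
qed

lemma closed_subspace_from_levels:
  assumes C: "closed_subspace C" and f: "f \<in> ell2" and levels: "\<And>r. restr r f \<in> C"
  shows "f \<in> C"
proof (rule closed_subspace_limit[OF C _ f tendsto_truncation[OF f]])
  fix R show "(\<lambda>v. \<Sum>r<R. restr r f v) \<in> C"
  proof (induction R)
    case 0
    then show ?case using linear_subspace_zero[OF closed_subspace_linear[OF C]] by simp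
  next
    case (Suc R)
    then show ?case
      using linear_subspace_add[OF closed_subspace_linear[OF C] Suc levels] by simp
  qed
qed

lemma ell2_subset_closed_subspace:
  assumes C: "closed_subspace C" and "\<And>n r. n \<le> r \<Longrightarrow> Usp par v0 n r \<subseteq> C"
  shows "ell2 \<subseteq> C"
proof
  have "U n r \<subseteq> C" for n r
    using assms linear_subspace_zero[OF closed_subspace_linear[OF C]] by (auto simp: U_def)
  then have "supported_on (level r) \<subseteq> C" for r
    by (intro supported_level_subset closed_subspace_linear[OF C])
  then show "f \<in> C" if "f \<in> ell2" for f
    using closed_subspace_from_levels[OF C that] restr_supported by blast
qed

lemma closed_subspace_Vsp: "closed_subspace (Vsp par v0 n)"
  unfolding Vsp_def by (rule closed_subspace_closed_span) (use Usp_subset_ell2 in blast)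

lemma U_subset_Vsp: "U n r \<subseteq> Vsp par v0 n"
proof (cases "n \<le> r")
  case True
  then show ?thesis
    unfolding Vsp_def using closed_span_upper by (fastforce simp: Usp_eq_U)
qed (simp add: U_below linear_subspace_zero closed_subspace_linear closed_subspace_Vsp)

definition Vsum :: "nat \<Rightarrow> ('v \<Rightarrow> complex) set" where
  "Vsum n = {f \<in> ell2. \<forall>r. restr r f \<in> U n r}"

lemma closed_subspace_Vsum: "closed_subspace (Vsum n)"
proof (rule closed_subspaceI)
  show "linear_subspace (Vsum n)"
    using linear_subspace_U linear_subspace_ell2
    by (auto simp: linear_subspace_def Vsum_def restr_zero restr_add restr_scale)
  show "Vsum n \<subseteq> ell2" by (auto simp: Vsum_def)
next
  fix s f assume s: "\<And>k. s k \<in> Vsum n" and f: "f \<in> ell2"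
    and lim: "(\<lambda>k. l2norm (\<lambda>v. s k v - f v)) \<longlonglongrightarrow> 0"
  have pointwise: "(\<lambda>k. s k v) \<longlonglongrightarrow> f v" for v
    using s f lim by (intro l2_tendsto_imp_pointwise) (auto simp: Vsum_def)
  have "restr r f \<in> U n r" for r
  proof (rule pointwise_closedD[OF pointwise_closed_U])
    show "restr r (s k) \<in> U n r" for k
      using s by (simp add: Vsum_def)
    show "(\<lambda>k. restr r (s k) v) \<longlonglongrightarrow> restr r f v" for v
      using pointwise by (simp add: restr_def)
  qed
  with f show "f \<in> Vsum n" by (simp add: Vsum_def)
qed

lemma U_subset_Vsum: "U n r \<subseteq> Vsum n"
proof
  fix f assume f: "f \<in> U n r"
  then have "restr r' f = (if r' = r then f else (\<lambda>v. 0))" for r'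
    using U_subset_supported by (intro restr_of_supported) blast
  with f have "restr r' f \<in> U n r'" for r'
    using linear_subspace_zero[OF linear_subspace_U] by simp
  with f U_subset_ell2 show "f \<in> Vsum n" by (auto simp: Vsum_def)
qed

lemma Vsp_eq_Vsum: "Vsp par v0 n = Vsum n"
proof
  show "Vsp par v0 n \<subseteq> Vsum n"
    unfolding Vsp_def using U_subset_Vsum
    by (intro closed_span_least closed_subspace_Vsum) (force simp: Usp_eq_U)
  show "Vsum n \<subseteq> Vsp par v0 n"
  proof
    fix f assume f: "f \<in> Vsum n"
    show "f \<in> Vsp par v0 n"
    proof (rule closed_subspace_from_levels[OF closed_subspace_Vsp])
      show "f \<in> ell2" using f by (simp add: Vsum_def)
      show "restr r f \<in> Vsp par v0 n" for r
        using f U_subset_Vsp by (auto simp: Vsum_def)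
    qed
  qed
qed

lemma orth_Vsp:
  assumes "n \<noteq> m"
  shows "orth (Vsp par v0 n) (Vsp par v0 m)"
  unfolding orth_def Vsp_eq_Vsum
proof (intro ballI)
  fix f g assume f: "f \<in> Vsum n" and g: "g \<in> Vsum m"
  have "inner_on (level r) f g = 0" for r
  proof -
    have "inner_on (level r) f g = inner_on (level r) (restr r f) (restr r g)"
      by (simp add: inner_on_def restr_def)
    also have "\<dots> = 0"
      using f g assms by (intro U_orth) (auto simp: Vsum_def)
    finally show ?thesis .
  qed
  then have "(\<lambda>R. 0) \<longlonglongrightarrow> l2inner f g"
    using f g tendsto_inner_on_levels[of f g] by (simp add: Vsum_def)
  then show "l2inner f g = 0" by (simp add: LIMSEQ_const_iff)
qed

lemma H_Vsp:
  assumes "f \<in> Vsp par v0 n"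
  shows "H f \<in> Vsp par v0 n"
proof -
  have f: "f \<in> ell2" "\<And>r. restr r f \<in> U n r"
    using assms by (auto simp: Vsp_eq_Vsum Vsum_def)
  have "restr r (H f) \<in> U n r" for r
    using f(2) H_U linear_subspace_zero[OF linear_subspace_U]
    by (cases r) (simp_all add: restr_0_H restr_Suc_H)
  with H_ell2[OF f(1)] show ?thesis by (simp add: Vsp_eq_Vsum Vsum_def)
qed

lemma Hstar_Vsp: "f \<in> Vsp par v0 n \<Longrightarrow> Hstar f \<in> Vsp par v0 n"
  using Hstar_ell2 Hstar_U by (auto simp: Vsp_eq_Vsum Vsum_def restr_Hstar)

lemma adjacency_Vsp: "f \<in> Vsp par v0 n \<Longrightarrow> adjacency par v0 f \<in> Vsp par v0 n"
  unfolding adjacency_eq using H_Vsp Hstar_Vsp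
  by (intro linear_subspace_add[OF closed_subspace_linear[OF closed_subspace_Vsp]])

lemma adjoint_Vsp:
  assumes "is_adjoint H L" "f \<in> Vsp par v0 n"
  shows "L f \<in> Vsp par v0 n"
proof -
  have "f \<in> ell2"
    using assms(2) closed_subspace_subset_ell2[OF closed_subspace_Vsp] by blast
  then have "L f = Hstar f" by (rule adjoint_eq_Hstar[OF assms(1)])
  with Hstar_Vsp[OF assms(2)] show ?thesis by simp
qed

lemma closed_span_Usp: "closed_span (\<Union>n. \<Union>r\<in>{n..}. Usp par v0 n r) = ell2"
proof (rule closed_span_eq_ell2I)
  show "(\<Union>n. \<Union>r\<in>{n..}. Usp par v0 n r) \<subseteq> ell2"
    using Usp_subset_ell2 by blast
  show "ell2 \<subseteq> W" if "closed_subspace W" "(\<Union>n. \<Union>r\<in>{n..}. Usp par v0 n r) \<subseteq> W" for W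
    using that(2) by (intro ell2_subset_closed_subspace[OF that(1)]) auto
qed

lemma closed_span_Vsp: "closed_span (\<Union>n. Vsp par v0 n) = ell2"
proof (rule closed_span_eq_ell2I)
  show "(\<Union>n. Vsp par v0 n) \<subseteq> ell2"
    using closed_subspace_subset_ell2[OF closed_subspace_Vsp] by blast
  show "ell2 \<subseteq> W" if W: "closed_subspace W" and V: "(\<Union>n. Vsp par v0 n) \<subseteq> W" for W
  proof (rule ell2_subset_closed_subspace[OF W])
    show "Usp par v0 n r \<subseteq> W" if "n \<le> r" for n r
      using V U_subset_Vsp[of n r] that by (auto simp: Usp_eq_U)
  qed
qed

end

theorem proposition4p2:
  fixes par :: "'v \<Rightarrow> 'v" and v0 :: 'v and d :: "nat \<Rightarrow> nat"
  assumes rooted: "\<forall>v. \<exists>n. (par ^^ n) v = v0"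
    and sph: "\<forall>v. finite (children par v0 v) \<and> card (children par v0 v) = d (depth par v0 v)"
    and deg2: "\<forall>r. 2 \<le> d r"
    and bdd: "\<exists>M. \<forall>r. d r \<le> M"
  shows
    "(\<forall>n. closed_subspace (Vsp par v0 n))
     \<and> (\<forall>n m. n \<noteq> m \<longrightarrow> orth (Vsp par v0 n) (Vsp par v0 m))
     \<and> closed_span (\<Union>n. Vsp par v0 n) = ell2
     \<and> (\<forall>n r. n \<le> r \<longrightarrow> closed_subspace (Usp par v0 n r))
     \<and> (\<forall>n r n' r'. n \<le> r \<and> n' \<le> r' \<and> (n, r) \<noteq> (n', r') \<longrightarrow>
          orth (Usp par v0 n r) (Usp par v0 n' r'))
     \<and> closed_span (\<Union>n. \<Union>r\<in>{n..}. Usp par v0 n r) = ell2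
     \<and> (\<forall>n. \<forall>f\<in>Vsp par v0 n.
          Hop par v0 f \<in> Vsp par v0 n
          \<and> adjacency par v0 f \<in> Vsp par v0 n
          \<and> (\<forall>L. is_adjoint (Hop par v0) L \<longrightarrow> L f \<in> Vsp par v0 n))"
proof -
  interpret spherically_symmetric_tree par v0 d
  proof
    show "0 < d r" for r using deg2[rule_format, of r] by linarith
  qed (use rooted sph bdd in blast)+
  show ?thesis
  proof (intro conjI allI impI ballI)
    show "closed_subspace (Vsp par v0 n)" for n by (rule closed_subspace_Vsp)
    show "orth (Vsp par v0 n) (Vsp par v0 m)" if "n \<noteq> m" for n m
      using that by (rule orth_Vsp)
    show "closed_span (\<Union>n. Vsp par v0 n) = ell2" by (rule closed_span_Vsp)
    show "closed_subspace (Usp par v0 n r)" if "n \<le> r" for n r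
      using that by (rule closed_subspace_Usp)
    show "orth (Usp par v0 n r) (Usp par v0 n' r')"
      if "n \<le> r \<and> n' \<le> r' \<and> (n, r) \<noteq> (n', r')" for n r n' r'
      using that orth_Usp by blast
    show "closed_span (\<Union>n. \<Union>r\<in>{n..}. Usp par v0 n r) = ell2" by (rule closed_span_Usp)
    show "Hop par v0 f \<in> Vsp par v0 n" if "f \<in> Vsp par v0 n" for n f
      using that by (rule H_Vsp)
    show "adjacency par v0 f \<in> Vsp par v0 n" if "f \<in> Vsp par v0 n" for n f
      using that by (rule adjacency_Vsp)
    show "L f \<in> Vsp par v0 n" if "f \<in> Vsp par v0 n" "is_adjoint (Hop par v0) L" for n f L
      using that(2,1) by (rule adjoint_Vsp)
  qed
qed

end
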